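(* In the monkey model with $K\ge2$ letters, space probability $s\in(0,1)$, and equal letter probabilities $q_1=\cdots=q_K=(1-s)/K$, every rank $r\ge1$ satisfies $$\frac1K\,B_r^{\log_{q_1}K}<r<\frac{K}{K-1}\,B_r^{\log_{q_1}K},$$ so the power-law exponent is $-\beta=1/\log_{q_1}K=\frac{\log(1-s)}{\log K}-1$. In particular, for fixed $s$, $-\beta\to-1$ as $K\to\infty$.
   Context: Monkey model: a keyboard has $K$ letters $L_1,\dots,L_K$ struck independently with probabilities $q_1,\dots,q_K$ and a space character with probability $s$, where $\sum_i q_i+s=1$. A word is a finite (possibly empty) string $L_{i_1}\cdots L_{i_n}$ of letters followed by a space. Its base value is $B=q_{i_1}\cdots q_{i_n}$ (the empty word has base value $1$). The base values of all finitely long words, listed with multiplicity in non-increasing order with ties broken by alphabetical order, are denoted $B_1=1\ge B_2\ge\cdots$; $r$ is the rank of $B_r$. *)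

theory Defs
  imports "HOL-Analysis.Analysis"
begin

text \<open>Letters are 0,...,K-1 (letter i has probability q i);
words are finite lists of letters (the trailing space is implicit).\<close>

definition monkey_words :: "nat \<Rightarrow> nat list set" where
  "monkey_words K = {w. set w \<subseteq> {..<K}}"

definition base_value :: "(nat \<Rightarrow> real) \<Rightarrow> nat list \<Rightarrow> real" where
  "base_value q w = prod_list (map q w)"

text \<open>Rank of a word in the list of all words sorted by non-increasing base value,
ties broken alphabetically.\<close>
definition word_rank :: "nat \<Rightarrow> (nat \<Rightarrow> real) \<Rightarrow> nat list \<Rightarrow> nat" where
  "word_rank K q w = Suc (card {v \<in> monkey_words K.
      base_value q v > base_value q w \<or>
      (base_value q v = base_value q w \<and> ord_class.lexordp v w)})"

definition B :: "nat \<Rightarrow> (nat \<Rightarrow> real) \<Rightarrow> nat \<Rightarrow> real" where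
  "B K q r = (THE b. \<exists>w \<in> monkey_words K. word_rank K q w = r \<and> base_value q w = b)"

end

theory Submission
  imports Defs
begin

text \<open>With equal letter probabilities p, a word of length n has base value p^n, so the
  words are ranked first by length and then alphabetically. The words of length n therefore
  occupy exactly the ranks from 1 + (K^n - 1)/(K - 1) to (K^(n+1) - 1)/(K - 1), where
  B_r = p^n, i.e. B_r powr log p K = K^n. Comparing these rank bounds with K^n gives the
  two-sided estimate, and the exponent is 1/log p K = ln p/ln K = ln (1 - s)/ln K - 1.\<close>

lemma base_value_const:
  assumes "set w \<subseteq> {..<K}" "\<forall>i<K. q i = p"
  shows "base_value q w = p ^ length w"
  using assms by (induction w) (auto simp: base_value_def)

definition words_of_length :: "nat \<Rightarrow> nat \<Rightarrow> nat list set" where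
  "words_of_length K n = {v. set v \<subseteq> {..<K} \<and> length v = n}"

definition shorter_words :: "nat \<Rightarrow> nat \<Rightarrow> nat list set" where
  "shorter_words K n = {v. set v \<subseteq> {..<K} \<and> length v < n}"

lemma finite_words_of_length: "finite (words_of_length K n)"
  and card_words_of_length: "card (words_of_length K n) = K ^ n"
  unfolding words_of_length_def by (auto intro: finite_lists_length_eq simp: card_lists_length_eq)

lemma finite_shorter_words: "finite (shorter_words K n)"
proof -
  have "shorter_words K n \<subseteq> {v. set v \<subseteq> {..<K} \<and> length v \<le> n}"
    unfolding shorter_words_def by auto
  then show ?thesis using finite_lists_length_le[of "{..<K}" n] finite_subset by blast
qed

lemma card_shorter_words: "card (shorter_words K n) = (\<Sum>i<n. K ^ i)"
proof (induction n)
  case 0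
  then show ?case by (simp add: shorter_words_def)
next
  case (Suc n)
  have "shorter_words K (Suc n) = shorter_words K n \<union> words_of_length K n"
    and "shorter_words K n \<inter> words_of_length K n = {}"
    unfolding shorter_words_def words_of_length_def by auto
  then show ?case
    using Suc finite_shorter_words finite_words_of_length card_words_of_length
    by (simp add: card_Un_disjoint)
qed

lemma card_shorter_words_mono: "m \<le> n \<Longrightarrow> card (shorter_words K m) \<le> card (shorter_words K n)"
  unfolding card_shorter_words by (rule sum_mono2) auto

definition lex_index :: "nat \<Rightarrow> nat list \<Rightarrow> nat" where
  "lex_index K w = card {v \<in> words_of_length K (length w). ord_class.lexordp v w}"

lemma lex_index_less:
  assumes "w \<in> words_of_length K n"
  shows "lex_index K w < K ^ n"
proof -
  have "{v \<in> words_of_length K n. ord_class.lexordp v w} \<subset> words_of_length K n"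
    using assms lexordp_irreflexive' by blast
  then have "card {v \<in> words_of_length K n. ord_class.lexordp v w} < K ^ n"
    using psubset_card_mono finite_words_of_length card_words_of_length by metis
  then show ?thesis
    using assms unfolding lex_index_def words_of_length_def by simp
qed

lemma lex_index_strict_mono:
  assumes a: "a \<in> words_of_length K n" and b: "b \<in> words_of_length K n"
    and ab: "ord_class.lexordp a b"
  shows "lex_index K a < lex_index K b"
proof -
  have "{u \<in> words_of_length K n. ord_class.lexordp u a}
      \<subset> {u \<in> words_of_length K n. ord_class.lexordp u b}"
    using ab a lexordp_trans lexordp_irreflexive' by blast
  then have "card {u \<in> words_of_length K n. ord_class.lexordp u a}
      < card {u \<in> words_of_length K n. ord_class.lexordp u b}"
    by (rule psubset_card_mono[rotated]) (simp add: finite_words_of_length)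
  then show ?thesis
    using a b unfolding lex_index_def words_of_length_def by simp
qed

lemma bij_betw_lex_index: "bij_betw (lex_index K) (words_of_length K n) {..<K ^ n}"
proof -
  have inj: "inj_on (lex_index K) (words_of_length K n)"
  proof (rule inj_onI, rule ccontr)
    fix v w
    assume "v \<in> words_of_length K n" "w \<in> words_of_length K n"
      and "lex_index K v = lex_index K w" "v \<noteq> w"
    then show False
      using lexordp_linear[of v w] lex_index_strict_mono[of v K n w]
        lex_index_strict_mono[of w K n v] by auto
  qed
  moreover have "lex_index K ` words_of_length K n = {..<K ^ n}"
  proof (rule card_subset_eq)
    show "lex_index K ` words_of_length K n \<subseteq> {..<K ^ n}"
      using lex_index_less by auto
    show "card (lex_index K ` words_of_length K n) = card {..<K ^ n}"
      using card_image[OF inj] card_words_of_length by simp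
  qed simp
  ultimately show ?thesis unfolding bij_betw_def ..
qed

lemma word_rank_const:
  fixes p :: real
  assumes p: "0 < p" "p < 1" and qp: "\<forall>i<K. q i = p" and w: "w \<in> monkey_words K"
  shows "word_rank K q w = Suc (card (shorter_words K (length w)) + lex_index K w)"
proof -
  have bv: "base_value q v = p ^ length v" if "v \<in> monkey_words K" for v
    using base_value_const[OF _ qp] that by (simp add: monkey_words_def)
  have "{v \<in> monkey_words K. base_value q v > base_value q w \<or>
      (base_value q v = base_value q w \<and> ord_class.lexordp v w)}
      = shorter_words K (length w)
        \<union> {v \<in> words_of_length K (length w). ord_class.lexordp v w}"
    using w p
    by (auto simp: bv power_strict_decreasing_iff power_inject_exp'
        shorter_words_def words_of_length_def monkey_words_def)
  moreover have "shorter_words K (length w)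
      \<inter> {v \<in> words_of_length K (length w). ord_class.lexordp v w} = {}"
    by (auto simp: shorter_words_def words_of_length_def)
  ultimately show ?thesis
    unfolding word_rank_def lex_index_def
    by (simp add: card_Un_disjoint finite_shorter_words finite_words_of_length)
qed

lemma length_class_unique:
  assumes "card (shorter_words K m) < r" "r \<le> card (shorter_words K (Suc m))"
    and "card (shorter_words K n) < r" "r \<le> card (shorter_words K (Suc n))"
  shows "m = n"
  using assms card_shorter_words_mono[of "Suc m" n K] card_shorter_words_mono[of "Suc n" m K]
  by (cases m n rule: linorder_cases) auto

lemma length_class_exists:
  assumes "K \<ge> 1" "r \<ge> 1"
  shows "\<exists>n. card (shorter_words K n) < r \<and> r \<le> card (shorter_words K (Suc n))"
proof -
  have "r \<le> card (shorter_words K r)"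
  proof -
    have "(\<Sum>i<r. 1) \<le> (\<Sum>i<r. K ^ i)"
      using assms by (intro sum_mono) simp
    then show ?thesis by (simp add: card_shorter_words)
  qed
  then show ?thesis
    using ex_least_nat_less[of "\<lambda>m. r \<le> card (shorter_words K m)" r] assms
    by (force simp: card_shorter_words)
qed

lemma B_const:
  fixes p :: real
  assumes p: "0 < p" "p < 1" and qp: "\<forall>i<K. q i = p"
    and n: "card (shorter_words K n) < r" "r \<le> card (shorter_words K (Suc n))"
  shows "B K q r = p ^ n"
  unfolding B_def
proof (rule the_equality)
  have "r - Suc (card (shorter_words K n)) \<in> lex_index K ` words_of_length K n"
    using n bij_betw_imp_surj_on[OF bij_betw_lex_index]
    by (auto simp: card_shorter_words)
  then obtain w where w: "w \<in> words_of_length K n"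
    and idx: "lex_index K w = r - Suc (card (shorter_words K n))"
    by auto
  have wm: "w \<in> monkey_words K" and lw: "length w = n"
    using w by (auto simp: words_of_length_def monkey_words_def)
  show "\<exists>w\<in>monkey_words K. word_rank K q w = r \<and> base_value q w = p ^ n"
    using wm word_rank_const[OF p qp wm] base_value_const[OF _ qp] n lw idx
    by (auto simp: monkey_words_def)
next
  fix b
  assume "\<exists>w\<in>monkey_words K. word_rank K q w = r \<and> base_value q w = b"
  then obtain v where v: "v \<in> monkey_words K" "word_rank K q v = r" "base_value q v = b"
    by blast
  have "v \<in> words_of_length K (length v)"
    using v(1) by (simp add: words_of_length_def monkey_words_def)
  then have "lex_index K v < K ^ length v" by (rule lex_index_less)
  then have "length v = n"
    using length_class_unique[of K "length v" r n] word_rank_const[OF p qp v(1)] v(2) n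
    by (simp add: card_shorter_words)
  then show "b = p ^ n"
    using v base_value_const[OF _ qp] by (simp add: monkey_words_def)
qed

lemma geometric_rank_bounds:
  fixes x r :: real
  assumes x: "x \<ge> 2" and S: "S * (x - 1) = x ^ n - 1"
    and lower: "S + 1 \<le> r" and upper: "r \<le> S + x ^ n"
  shows "1 / x * x ^ n < r \<and> r < x / (x - 1) * x ^ n"
proof
  have "x ^ n * (x - 1) < x * (S + 1) * (x - 1)"
  proof -
    have "x * (S + 1) * (x - 1) = x * (S * (x - 1)) + x * (x - 1)"
      by (simp add: algebra_simps)
    also have "\<dots> = x * (x ^ n - 1) + x * (x - 1)"
      by (simp only: S)
    also have "\<dots> = x * x ^ n + x * (x - 2)"
      by (simp add: algebra_simps)
    finally have "x * (S + 1) * (x - 1) = x * x ^ n + x * (x - 2)" .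
    moreover have "x * (x - 2) \<ge> 0" using x by simp
    moreover have "x ^ n > 0" using x by simp
    ultimately show ?thesis by (simp add: algebra_simps)
  qed
  then have "x ^ n < x * (S + 1)"
    using x by (simp add: mult_less_cancel_right)
  also have "\<dots> \<le> x * r"
    using x lower by simp
  finally show "1 / x * x ^ n < r"
    using x by (simp add: field_simps)
  have "r * (x - 1) \<le> (S + x ^ n) * (x - 1)"
    using x upper by (simp add: mult_right_mono)
  also have "\<dots> < x * x ^ n"
    using S by (simp add: algebra_simps)
  finally show "r < x / (x - 1) * x ^ n"
    using x by (simp add: field_simps)
qed

lemma uniform_rank_bounds:
  fixes p :: real
  assumes K2: "K \<ge> 2" and p: "0 < p" "p < 1" and qp: "\<forall>i<K. q i = p" and r: "r \<ge> 1"
  shows "1 / real K * B K q r powr log p (real K) < real r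
    \<and> real r < real K / (real K - 1) * B K q r powr log p (real K)"
proof -
  obtain n where n: "card (shorter_words K n) < r" "r \<le> card (shorter_words K (Suc n))"
    using length_class_exists[of K r] K2 r by auto
  have "B K q r powr log p (real K) = (p powr log p (real K)) ^ n"
    using B_const[OF p qp n] p
    by (simp add: powr_realpow[symmetric] powr_powr powr_power mult.commute)
  also have "\<dots> = real K ^ n" using p K2 by simp
  finally have "B K q r powr log p (real K) = real K ^ n" .
  moreover have "real (card (shorter_words K n)) * (real K - 1) = real K ^ n - 1"
    by (simp add: card_shorter_words power_diff_1_eq[of "real K"] mult.commute)
  moreover have "r \<le> card (shorter_words K n) + K ^ n"
    using n(2) by (simp add: card_shorter_words)
  then have "real (card (shorter_words K n)) + 1 \<le> real r"
    and "real r \<le> real (card (shorter_words K n)) + real K ^ n"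
    using n(1) by (simp_all flip: of_nat_power of_nat_add)
  ultimately show ?thesis
    using geometric_rank_bounds[of "real K"] K2 by simp
qed

lemma inverse_log_eq:
  fixes s x :: real
  assumes "s < 1" "x > 1"
  shows "1 / log ((1 - s) / x) x = ln (1 - s) / ln x - 1"
  using assms by (simp add: log_def ln_div field_simps)

lemma const_div_ln_tendsto_0: "((\<lambda>k::nat. c / ln (real k)) \<longlongrightarrow> 0) at_top"
  by (intro tendsto_divide_0[OF tendsto_const] filterlim_at_top_imp_at_infinity
      filterlim_compose[OF ln_at_top filterlim_real_sequentially])

theorem mainTheorem2:
  fixes K :: nat and s :: real and q :: "nat \<Rightarrow> real"
  assumes K2: "K \<ge> 2"
    and s_pos: "0 < s" and s_lt1: "s < 1"
    and q_eq: "\<forall>i<K. q i = (1 - s) / real K"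
  shows "(\<forall>r::nat. r \<ge> 1 \<longrightarrow>
            1 / real K * B K q r powr log (q 0) (real K) < real r \<and>
            real r < real K / (real K - 1) * B K q r powr log (q 0) (real K))
       \<and> 1 / log (q 0) (real K) = ln (1 - s) / ln (real K) - 1
       \<and> ((\<lambda>k::nat. 1 / log ((1 - s) / real k) (real k)) \<longlongrightarrow> -1) at_top"
proof (intro conjI allI impI)
  have q0: "q 0 = (1 - s) / real K"
    using K2 q_eq by simp
  then have p: "0 < q 0" "q 0 < 1"
    using K2 s_pos s_lt1 by (simp_all add: divide_less_eq)
  fix r :: nat
  assume "r \<ge> 1"
  then show "1 / real K * B K q r powr log (q 0) (real K) < real r"
    and "real r < real K / (real K - 1) * B K q r powr log (q 0) (real K)"
    using uniform_rank_bounds[OF K2 p] q_eq q0 by simp_all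
next
  show "1 / log (q 0) (real K) = ln (1 - s) / ln (real K) - 1"
    using q_eq K2 s_lt1 inverse_log_eq[of s "real K"] by simp
next
  have "\<forall>\<^sub>F k in at_top. ln (1 - s) / ln (real k) - 1 = 1 / log ((1 - s) / real k) (real k)"
    using eventually_gt_at_top[of "1::nat"] by eventually_elim (simp add: inverse_log_eq s_lt1)
  moreover have "((\<lambda>k::nat. ln (1 - s) / ln (real k) - 1) \<longlongrightarrow> 0 - 1) at_top"
    by (intro tendsto_diff const_div_ln_tendsto_0 tendsto_const)
  ultimately show "((\<lambda>k::nat. 1 / log ((1 - s) / real k) (real k)) \<longlongrightarrow> -1) at_top"
    using tendsto_cong by fastforce
qed

end
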